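(* Let $1\le r\le s\le t$ and let $u=ABCd$, $v=A'B'C'd'$ be vertices of $E3C(r,s,t)$ with $A\ne A'$, $B=B'$, $C\ne C'$ and $d=d'$. Then there exist $2r+2$ pairwise internally disjoint $u$–$v$ paths in $E3C(r,s,t)$, each of length at most $r+t+7$ if $d\in\{0,2\}$, and each of length at most $r+t+5$ if $d=1$.
   Context: The exchanged 3-ary $n$-cube $E3C(r,s,t)$ ($r,s,t\ge1$, $n=r+s+t+1$): vertices are strings written $x=ABCd$ with $A\in\{0,1,2\}^r$, $B\in\{0,1,2\}^s$, $C\in\{0,1,2\}^t$, $d\in\{0,1,2\}$. Two distinct vertices $x=ABCd$, $y=A'B'C'd'$ are adjacent iff one of: (E0) $A=A',B=B',C=C'$ and $d\ne d'$; (E1) $d=d'=0$, $A=A'$, $B=B'$ and $C,C'$ differ in exactly one position; (E2) $d=d'=1$, $A=A'$, $C=C'$ and $B,B'$ differ in exactly one position; (E3) $d=d'=2$, $B=B'$, $C=C'$ and $A,A'$ differ in exactly one position. Paths are internally disjoint if they share no vertices other than their endpoints; length = number of edges. *)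

theory Defs
  imports Main
begin

text \<open>Vertices of E3C(r,s,t): a vertex ABCd is represented as the tuple (A,B,C,d)
  with A,B,C words over {0,1,2} (lists of naturals < 3) of lengths r,s,t and d < 3.\<close>

type_synonym e3vert = "nat list \<times> nat list \<times> nat list \<times> nat"

definition ternary_word :: "nat \<Rightarrow> nat list \<Rightarrow> bool" where
  "ternary_word k w \<longleftrightarrow> length w = k \<and> (\<forall>x\<in>set w. x < 3)"

definition e3c_vertex :: "nat \<Rightarrow> nat \<Rightarrow> nat \<Rightarrow> e3vert \<Rightarrow> bool" where
  "e3c_vertex r s t x \<longleftrightarrow>
     (case x of (A, B, C, d) \<Rightarrow> ternary_word r A \<and> ternary_word s B \<and> ternary_word t C \<and> d < 3)"

definition differ_one :: "nat list \<Rightarrow> nat list \<Rightarrow> bool" where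
  "differ_one X Y \<longleftrightarrow> length X = length Y \<and> card {i. i < length X \<and> X ! i \<noteq> Y ! i} = 1"

definition e3c_adj :: "nat \<Rightarrow> nat \<Rightarrow> nat \<Rightarrow> e3vert \<Rightarrow> e3vert \<Rightarrow> bool" where
  "e3c_adj r s t x y \<longleftrightarrow> e3c_vertex r s t x \<and> e3c_vertex r s t y \<and> x \<noteq> y \<and>
     (case x of (A, B, C, d) \<Rightarrow> case y of (A', B', C', d') \<Rightarrow>
        (A = A' \<and> B = B' \<and> C = C' \<and> d \<noteq> d') \<or>
        (d = 0 \<and> d' = 0 \<and> A = A' \<and> B = B' \<and> differ_one C C') \<or>
        (d = 1 \<and> d' = 1 \<and> A = A' \<and> C = C' \<and> differ_one B B') \<or>
        (d = 2 \<and> d' = 2 \<and> B = B' \<and> C = C' \<and> differ_one A A'))"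

text \<open>A u-v path: a list of distinct vertices from u to v, consecutive ones adjacent.
  Its length is the number of edges, i.e. length p - 1.\<close>
definition e3c_path :: "nat \<Rightarrow> nat \<Rightarrow> nat \<Rightarrow> e3vert \<Rightarrow> e3vert \<Rightarrow> e3vert list \<Rightarrow> bool" where
  "e3c_path r s t u v p \<longleftrightarrow> p \<noteq> [] \<and> hd p = u \<and> last p = v \<and> distinct p \<and>
     (\<forall>i. Suc i < length p \<longrightarrow> e3c_adj r s t (p ! i) (p ! Suc i))"

definition internally_disjoint :: "e3vert \<Rightarrow> e3vert \<Rightarrow> e3vert list list \<Rightarrow> bool" where
  "internally_disjoint u v Ps \<longleftrightarrow>
     (\<forall>i j. i < length Ps \<and> j < length Ps \<and> i \<noteq> j \<longrightarrow> set (Ps ! i) \<inter> set (Ps ! j) \<subseteq> {u, v})"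

end

theory Submission
  imports Defs
begin

text \<open>
  Every path leaves the common layer of u and v, changes A into A' inside layer 2 and C into C'
  inside layer 0 by flipping the differing letters one at a time, and returns; the paths are kept
  apart by where they leave and by the order of the flips.

  For d = 1 a path first changes one of the first r letters of B (possible as r \<le> s) to one of its
  two other values, which gives 2r paths whose inner vertices carry pairwise different B-words;
  two more paths keep B and do the A- and C-changes in the two possible orders.

  For d = 2 a path first changes one letter A_i to one of its two other values, crosses to layer 0
  to turn C into C', and then turns A_i into A' in layer 2 flipping the differing positions in the
  cyclic order i+1, ..., r-1, 0, ..., i. Two such tails (for i \<noteq> j) cannot meet: a common word
  would already have flipped j but not some k in the walk from i, and already flipped i but not k
  in the walk from j, so k would come after j counting from i and after i counting from j, which is
  impossible for three positions on a cycle. The remaining two paths go through layer 0 and layer 1.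

  The case d = 0 is the case d = 2 of E3C(t,s,r) under the symmetry (A,B,C,d) \<mapsto> (C,B,A,2-d),
  keeping 2r + 2 of the 2t + 2 paths.
\<close>

section \<open>Walks flipping one differing letter at a time\<close>

definition override_word :: "'a list \<Rightarrow> 'a list \<Rightarrow> nat set \<Rightarrow> 'a list" where
  "override_word X Y S = map (\<lambda>k. if k \<in> S then Y ! k else X ! k) [0..<length X]"

definition flip_order :: "'a list \<Rightarrow> 'a list \<Rightarrow> nat list \<Rightarrow> bool" where
  "flip_order X Y ps \<longleftrightarrow>
     length X = length Y \<and> distinct ps \<and> set ps = {k. k < length X \<and> X ! k \<noteq> Y ! k}"

definition flip_walk :: "'a list \<Rightarrow> 'a list \<Rightarrow> nat list \<Rightarrow> 'a list list" where
  "flip_walk X Y ps = map (\<lambda>m. override_word X Y (set (take m ps))) [0..<Suc (length ps)]"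

lemma length_override_word [simp]: "length (override_word X Y S) = length X"
  by (simp add: override_word_def)

lemma nth_override_word:
  "k < length X \<Longrightarrow> override_word X Y S ! k = (if k \<in> S then Y ! k else X ! k)"
  by (simp add: override_word_def)

lemma override_word_empty [simp]: "override_word X Y {} = X"
  by (simp add: override_word_def map_nth)

lemma override_word_eq_target:
  "length X = length Y \<Longrightarrow> {k. k < length X \<and> X ! k \<noteq> Y ! k} \<subseteq> S \<Longrightarrow> override_word X Y S = Y"
  by (auto simp: list_eq_iff_nth_eq nth_override_word)

lemma override_word_mismatches:
  assumes "flip_order X Y ps" "m \<le> length ps"
  shows "{k. k < length X \<and> override_word X Y (set (take m ps)) ! k \<noteq> Y ! k} = set (drop m ps)"
proof -
  have "set ps = set (take m ps) \<union> set (drop m ps)"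
    by (metis append_take_drop_id set_append)
  moreover have "set (take m ps) \<inter> set (drop m ps) = {}"
    using assms(1) distinct_append[of "take m ps" "drop m ps"] by (simp add: flip_order_def)
  ultimately have "set (drop m ps) = set ps - set (take m ps)" by blast
  with assms(1) show ?thesis
    using set_take_subset[of m ps] by (auto simp: flip_order_def nth_override_word split: if_splits)
qed

lemma differ_one_sym: "differ_one X Y \<Longrightarrow> differ_one Y X"
  by (simp add: differ_one_def eq_commute)

lemma differ_one_imp_neq: "differ_one X Y \<Longrightarrow> X \<noteq> Y"
  by (auto simp: differ_one_def)

lemma differ_one_list_update: "k < length X \<Longrightarrow> b \<noteq> X ! k \<Longrightarrow> differ_one X (X[k := b])"
proof -
  assume "k < length X" "b \<noteq> X ! k"
  then have "{i. i < length X \<and> X ! i \<noteq> X[k := b] ! i} = {k}"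
    by (auto simp: nth_list_update)
  then show ?thesis by (simp add: differ_one_def)
qed

lemma differ_one_override_word_insert:
  assumes "k \<notin> S" "k < length X" "X ! k \<noteq> Y ! k"
  shows "differ_one (override_word X Y S) (override_word X Y (insert k S))"
proof -
  have "{i. i < length X \<and> override_word X Y S ! i \<noteq> override_word X Y (insert k S) ! i} = {k}"
    using assms by (auto simp: nth_override_word split: if_splits)
  then show ?thesis by (simp add: differ_one_def)
qed

lemma length_flip_walk [simp]: "length (flip_walk X Y ps) = Suc (length ps)"
  by (simp add: flip_walk_def)

lemma flip_walk_not_Nil [simp]: "flip_walk X Y ps \<noteq> []"
  by (simp add: flip_walk_def)

lemma nth_flip_walk:
  "m \<le> length ps \<Longrightarrow> flip_walk X Y ps ! m = override_word X Y (set (take m ps))"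
  by (simp add: flip_walk_def del: upt_Suc)

lemma hd_flip_walk [simp]: "hd (flip_walk X Y ps) = X"
  by (simp add: hd_conv_nth nth_flip_walk)

lemma last_flip_walk: "flip_order X Y ps \<Longrightarrow> last (flip_walk X Y ps) = Y"
  by (simp add: last_conv_nth nth_flip_walk flip_order_def override_word_eq_target)

lemma set_flip_walk:
  "set (flip_walk X Y ps) = {override_word X Y (set (take m ps)) | m. m \<le> length ps}"
  by (auto simp: flip_walk_def simp del: upt_Suc)

lemma in_set_butlast_flip_walk:
  assumes "W \<in> set (butlast (flip_walk X Y ps))"
  shows "\<exists>m < length ps. W = override_word X Y (set (take m ps))"
proof -
  have "butlast (flip_walk X Y ps) = map (\<lambda>m. override_word X Y (set (take m ps))) [0..<length ps]"
    by (simp add: flip_walk_def map_butlast[symmetric] del: upt_Suc) simp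
  with assms show ?thesis by auto
qed

lemma distinct_flip_walk:
  assumes "flip_order X Y ps"
  shows "distinct (flip_walk X Y ps)"
proof -
  have "m = m'" if "m \<le> length ps" "m' \<le> length ps"
    and "override_word X Y (set (take m ps)) = override_word X Y (set (take m' ps))" for m m'
  proof -
    have "set (drop m ps) = set (drop m' ps)"
      using that override_word_mismatches[OF assms] by metis
    then have "length (drop m ps) = length (drop m' ps)"
      using assms by (metis distinct_card distinct_drop flip_order_def)
    with that show ?thesis by simp
  qed
  then show ?thesis
    by (auto simp: distinct_conv_nth nth_flip_walk)
qed

lemma successively_differ_one_flip_walk:
  assumes "flip_order X Y ps"
  shows "successively differ_one (flip_walk X Y ps)"
  unfolding successively_conv_nth
proof (intro allI impI)
  fix m assume "Suc m < length (flip_walk X Y ps)"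
  then have m: "m < length ps" by simp
  have "ps ! m \<notin> set (take m ps)" "ps ! m < length X" "X ! (ps ! m) \<noteq> Y ! (ps ! m)"
    using assms m nth_mem[OF m] distinct_take[of ps "Suc m"]
    by (auto simp: flip_order_def take_Suc_conv_app_nth)
  then show "differ_one (flip_walk X Y ps ! m) (flip_walk X Y ps ! Suc m)"
    using m by (simp add: nth_flip_walk take_Suc_conv_app_nth differ_one_override_word_insert)
qed

definition diff_positions :: "'a list \<Rightarrow> 'a list \<Rightarrow> nat list" where
  "diff_positions X Y = filter (\<lambda>k. X ! k \<noteq> Y ! k) [0..<length X]"

lemma set_diff_positions: "set (diff_positions X Y) = {k. k < length X \<and> X ! k \<noteq> Y ! k}"
  by (auto simp: diff_positions_def)

lemma diff_positions_eq_Nil_iff: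
  "length X = length Y \<Longrightarrow> diff_positions X Y = [] \<longleftrightarrow> X = Y"
  unfolding set_empty[symmetric] set_diff_positions by (simp add: list_eq_iff_nth_eq)

lemma flip_order_diff_positions: "length X = length Y \<Longrightarrow> flip_order X Y (diff_positions X Y)"
  by (simp add: flip_order_def set_diff_positions) (simp add: diff_positions_def)

lemma length_diff_positions: "length (diff_positions X Y) \<le> length X"
  using length_filter_le[of _ "[0..<length X]"] by (simp add: diff_positions_def)

section \<open>Cyclic flip orders\<close>

lemma set_subset_insert_last_butlast: "set xs \<subseteq> insert (last xs) (set (butlast xs))"
  by (induction xs) auto

lemma sorted_wrt_take_drop:
  "sorted_wrt R xs \<Longrightarrow> x \<in> set (take m xs) \<Longrightarrow> y \<in> set (drop m xs) \<Longrightarrow> R x y"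
  by (metis append_take_drop_id sorted_wrt_append)

definition cyclic_dist :: "nat \<Rightarrow> nat \<Rightarrow> nat \<Rightarrow> nat" where
  "cyclic_dist n i k = (if i < k then k - i else k + n - i)"

lemma cyclic_dist_rotate:
  assumes "i < n" "j < n" "k < n" "i \<noteq> j" "k \<noteq> i" "k \<noteq> j"
    and "cyclic_dist n i j < cyclic_dist n i k"
  shows "cyclic_dist n j k < cyclic_dist n j i"
  using assms by (auto simp: cyclic_dist_def split: if_splits)

definition cyclic_diff_positions :: "'a list \<Rightarrow> 'a list \<Rightarrow> nat \<Rightarrow> nat list" where
  "cyclic_diff_positions X Y i = filter (\<lambda>k. X ! k \<noteq> Y ! k) ([Suc i..<length X] @ [0..<Suc i])"

definition cyclic_flip_walk :: "'a list \<Rightarrow> 'a list \<Rightarrow> nat \<Rightarrow> 'a list list" where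
  "cyclic_flip_walk X Y i = flip_walk X Y (cyclic_diff_positions X Y i)"

lemma set_cyclic_positions: "i < n \<Longrightarrow> set ([Suc i..<n] @ [0..<Suc i]) = {..<n}"
  by auto

lemma flip_order_cyclic_diff_positions:
  assumes "length X = length Y" "i < length X"
  shows "flip_order X Y (cyclic_diff_positions X Y i)"
proof -
  have "set (cyclic_diff_positions X Y i) = {k \<in> {..<length X}. X ! k \<noteq> Y ! k}"
    unfolding cyclic_diff_positions_def set_filter set_cyclic_positions[OF assms(2)] ..
  moreover have "distinct (cyclic_diff_positions X Y i)"
    by (auto simp: cyclic_diff_positions_def)
  ultimately show ?thesis
    using assms(1) by (auto simp: flip_order_def)
qed

lemma length_cyclic_diff_positions:
  assumes "i < length X"
  shows "length (cyclic_diff_positions X Y i) \<le> length X"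
proof -
  have "length (cyclic_diff_positions X Y i) \<le> length ([Suc i..<length X] @ [0..<Suc i])"
    unfolding cyclic_diff_positions_def by (rule length_filter_le)
  with assms show ?thesis by simp
qed

lemma sorted_cyclic_diff_positions:
  assumes "i < length X"
  shows "sorted_wrt (\<lambda>k l. cyclic_dist (length X) i k < cyclic_dist (length X) i l)
           (cyclic_diff_positions X Y i)"
  unfolding cyclic_diff_positions_def
  by (intro sorted_wrt_filter)
     (use assms in \<open>auto simp: sorted_wrt_append cyclic_dist_def
        intro: sorted_wrt_mono_rel[OF _ sorted_wrt_upt]\<close>)

lemma cyclic_flip_walk_keeps_start:
  assumes "i < length X" "W \<in> set (butlast (cyclic_flip_walk X Y i))"
  shows "W ! i = X ! i"
proof -
  define xs where "xs = [Suc i..<length X] @ [0..<i]"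
  define L where "L = cyclic_diff_positions X Y i"
  have L: "L = filter (\<lambda>k. X ! k \<noteq> Y ! k) xs @ (if X ! i \<noteq> Y ! i then [i] else [])"
    using assms(1) by (simp add: L_def xs_def cyclic_diff_positions_def)
  obtain m where "m < length L" and W: "W = override_word X Y (set (take m L))"
    using in_set_butlast_flip_walk assms(2) unfolding cyclic_flip_walk_def L_def by blast
  then have "set (take m L) \<subseteq> set xs"
    using set_take_subset[of m "filter (\<lambda>k. X ! k \<noteq> Y ! k) xs"] by (auto simp: L split: if_splits)
  then show ?thesis
    using assms(1) by (auto simp: W nth_override_word xs_def)
qed

lemma cyclic_scans_remainders_differ:
  assumes "i < n" "j < n" "i \<noteq> j"
    and sorted_i: "sorted_wrt (\<lambda>k l. cyclic_dist n i k < cyclic_dist n i l) L" and "set L \<subseteq> {..<n}"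
    and sorted_j: "sorted_wrt (\<lambda>k l. cyclic_dist n j k < cyclic_dist n j l) L'"
    and "j \<in> set (take m L)" "i \<in> set (take m' L')" "m < length L"
  shows "set (drop m L) \<noteq> set (drop m' L')"
proof
  assume same: "set (drop m L) = set (drop m' L')"
  obtain k where k: "k \<in> set (drop m L)"
    using \<open>m < length L\<close> by (metis drop_eq_Nil2 last_in_set not_le)
  have "cyclic_dist n i j < cyclic_dist n i k"
    using sorted_wrt_take_drop[OF sorted_i \<open>j \<in> set (take m L)\<close> k] .
  moreover have "cyclic_dist n j i < cyclic_dist n j k"
    using sorted_wrt_take_drop[OF sorted_j \<open>i \<in> set (take m' L')\<close>] k same by simp
  moreover have "k < n"
    using k set_drop_subset[of m L] \<open>set L \<subseteq> {..<n}\<close> by auto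
  ultimately show False
    using cyclic_dist_rotate[OF \<open>i < n\<close> \<open>j < n\<close> _ \<open>i \<noteq> j\<close>] by fastforce
qed

lemma butlast_cyclic_flip_walks_disjoint:
  assumes len: "length A = length Y" and i: "i < length A" and j: "j < length A"
    and a: "a \<noteq> A ! i" and b: "b \<noteq> A ! j" and ij: "(i, a) \<noteq> (j, b)"
  shows "set (butlast (cyclic_flip_walk (A[i := a]) Y i)) \<inter>
         set (butlast (cyclic_flip_walk (A[j := b]) Y j)) = {}"
proof (rule ccontr)
  define Li where "Li = cyclic_diff_positions (A[i := a]) Y i"
  define Lj where "Lj = cyclic_diff_positions (A[j := b]) Y j"
  assume "\<not> ?thesis"
  then obtain W where Wi: "W \<in> set (butlast (flip_walk (A[i := a]) Y Li))"
    and Wj: "W \<in> set (butlast (flip_walk (A[j := b]) Y Lj))"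
    by (auto simp: cyclic_flip_walk_def Li_def Lj_def)
  obtain m where m: "m < length Li" and Wm: "W = override_word (A[i := a]) Y (set (take m Li))"
    using in_set_butlast_flip_walk[OF Wi] by blast
  obtain m' where m': "m' < length Lj" and Wm': "W = override_word (A[j := b]) Y (set (take m' Lj))"
    using in_set_butlast_flip_walk[OF Wj] by blast
  have "W ! i = a" "W ! j = b"
    using cyclic_flip_walk_keeps_start[of i "A[i := a]" W Y] Wi
      cyclic_flip_walk_keeps_start[of j "A[j := b]" W Y] Wj i j
    by (simp_all add: cyclic_flip_walk_def Li_def Lj_def)
  with ij have "i \<noteq> j" by auto
  have j_flipped: "j \<in> set (take m Li)"
    using \<open>W ! j = b\<close> b j \<open>i \<noteq> j\<close> by (simp add: Wm nth_override_word split: if_splits)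
  have i_flipped: "i \<in> set (take m' Lj)"
    using \<open>W ! i = a\<close> a i \<open>i \<noteq> j\<close> by (simp add: Wm' nth_override_word split: if_splits)
  have order: "flip_order (A[i := a]) Y Li" "flip_order (A[j := b]) Y Lj"
    using len i j by (simp_all add: Li_def Lj_def flip_order_cyclic_diff_positions)
  then have "set (drop m Li) = set (drop m' Lj)"
    using override_word_mismatches[OF order(1), of m] override_word_mismatches[OF order(2), of m']
      m m' by (simp add: Wm[symmetric] Wm'[symmetric])
  moreover have "set Li \<subseteq> {..<length A}"
    using order(1) by (auto simp: flip_order_def)
  ultimately show False
    using cyclic_scans_remainders_differ[OF i j \<open>i \<noteq> j\<close> _ _ _ j_flipped i_flipped m]
      sorted_cyclic_diff_positions[of i "A[i := a]" Y]
      sorted_cyclic_diff_positions[of j "A[j := b]" Y] i j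
    by (simp add: Li_def Lj_def)
qed

lemma ternary_word_list_update: "ternary_word n X \<Longrightarrow> b < 3 \<Longrightarrow> ternary_word n (X[k := b])"
  by (auto simp: ternary_word_def dest: set_update_subset_insert[THEN subsetD])

lemma override_word_ternary:
  "ternary_word n X \<Longrightarrow> ternary_word n Y \<Longrightarrow> ternary_word n (override_word X Y S)"
  by (auto simp: ternary_word_def override_word_def)

lemma flip_walk_ternary:
  "ternary_word n X \<Longrightarrow> ternary_word n Y \<Longrightarrow> W \<in> set (flip_walk X Y ps) \<Longrightarrow> ternary_word n W"
  by (auto simp: set_flip_walk override_word_ternary)

lemma flip_walk_properties:
  assumes "flip_order X Y ps" "ternary_word n X" "ternary_word n Y"
  shows "flip_walk X Y ps \<noteq> []" "hd (flip_walk X Y ps) = X" "last (flip_walk X Y ps) = Y"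
    "distinct (flip_walk X Y ps)" "successively differ_one (flip_walk X Y ps)"
    "\<forall>W\<in>set (flip_walk X Y ps). ternary_word n W"
  using assms flip_walk_ternary[OF assms(2,3)]
  by (simp_all add: last_flip_walk distinct_flip_walk successively_differ_one_flip_walk)

lemma third_ternary_value:
  "x < 3 \<Longrightarrow> y < 3 \<Longrightarrow> x \<noteq> y \<Longrightarrow> 3 - x - y < 3 \<and> 3 - x - y \<noteq> x \<and> 3 - x - y \<noteq> (y::nat)"
  by presburger

lemma list_update_neq: "k < length X \<Longrightarrow> b \<noteq> X ! k \<Longrightarrow> X[k := b] \<noteq> X"
  by (metis nth_list_update_eq)

lemma list_update_inject:
  "i < length X \<Longrightarrow> j < length X \<Longrightarrow> a \<noteq> X ! i \<Longrightarrow> b \<noteq> X ! j \<Longrightarrow>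
    X[i := a] = X[j := b] \<Longrightarrow> (i, a) = (j, b)"
  by (metis nth_list_update_eq nth_list_update_neq)

definition ternary_changes :: "nat list \<Rightarrow> nat \<Rightarrow> (nat \<times> nat) list" where
  "ternary_changes X n =
     concat (map (\<lambda>k. [(k, (X ! k + 1) mod 3), (k, (X ! k + 2) mod 3)]) [0..<n])"

lemma length_ternary_changes [simp]: "length (ternary_changes X n) = 2 * n"
  by (induction n) (auto simp: ternary_changes_def)

lemma distinct_ternary_changes: "distinct (ternary_changes X n)"
  by (induction n) (auto simp: ternary_changes_def, presburger)

lemma in_set_ternary_changes:
  "(k, b) \<in> set (ternary_changes X n) \<Longrightarrow> k < n \<and> b < 3 \<and> b \<noteq> X ! k"
  by (auto simp: ternary_changes_def) presburger+

lemma e3c_vertex_iff [simp]: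
  "e3c_vertex r s t (A, B, C, d) \<longleftrightarrow> ternary_word r A \<and> ternary_word s B \<and> ternary_word t C \<and> d < 3"
  by (simp add: e3c_vertex_def)

lemma e3c_path_iff_successively:
  "e3c_path r s t u v p \<longleftrightarrow>
     p \<noteq> [] \<and> hd p = u \<and> last p = v \<and> distinct p \<and> successively (e3c_adj r s t) p"
  by (simp add: e3c_path_def successively_conv_nth)

lemma e3c_adj_change_layer:
  "e3c_vertex r s t (A, B, C, d) \<Longrightarrow> d' < 3 \<Longrightarrow> d \<noteq> d' \<Longrightarrow> e3c_adj r s t (A, B, C, d) (A, B, C, d')"
  by (simp add: e3c_adj_def)

lemma e3c_adj_layer0:
  "ternary_word r A \<Longrightarrow> ternary_word s B \<Longrightarrow> ternary_word t C \<Longrightarrow> ternary_word t C'' \<Longrightarrow>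
    differ_one C C'' \<Longrightarrow> e3c_adj r s t (A, B, C, 0) (A, B, C'', 0)"
  by (auto simp: e3c_adj_def dest: differ_one_imp_neq)

text \<open>Stated with \<open>Suc 0\<close>, the simp normal form of \<open>1 :: nat\<close>, so that simp can use it.\<close>
lemma e3c_adj_layer1:
  "ternary_word r A \<Longrightarrow> ternary_word s B \<Longrightarrow> ternary_word s B'' \<Longrightarrow> ternary_word t C \<Longrightarrow>
    differ_one B B'' \<Longrightarrow> e3c_adj r s t (A, B, C, Suc 0) (A, B'', C, Suc 0)"
  by (auto simp: e3c_adj_def dest: differ_one_imp_neq)

lemma e3c_adj_layer2:
  "ternary_word r A \<Longrightarrow> ternary_word r A'' \<Longrightarrow> ternary_word s B \<Longrightarrow> ternary_word t C \<Longrightarrow>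
    differ_one A A'' \<Longrightarrow> e3c_adj r s t (A, B, C, 2) (A'', B, C, 2)"
  by (auto simp: e3c_adj_def dest: differ_one_imp_neq)

lemma successively_e3c_adj_layer0:
  assumes "successively differ_one Ws" "\<forall>W\<in>set Ws. ternary_word t W"
    and "ternary_word r A" "ternary_word s B"
  shows "successively (e3c_adj r s t) (map (\<lambda>W. (A, B, W, 0)) Ws)"
  unfolding successively_map
  by (rule successively_mono[OF assms(1)]) (use assms in \<open>auto intro: e3c_adj_layer0\<close>)

lemma successively_e3c_adj_layer2:
  assumes "successively differ_one Ws" "\<forall>W\<in>set Ws. ternary_word r W"
    and "ternary_word s B" "ternary_word t C"
  shows "successively (e3c_adj r s t) (map (\<lambda>W. (W, B, C, 2)) Ws)"
  unfolding successively_map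
  by (rule successively_mono[OF assms(1)]) (use assms in \<open>auto intro: e3c_adj_layer2\<close>)

definition disjoint_path_family ::
    "nat \<Rightarrow> nat \<Rightarrow> nat \<Rightarrow> e3vert \<Rightarrow> e3vert \<Rightarrow> nat \<Rightarrow> e3vert list list \<Rightarrow> bool" where
  "disjoint_path_family r s t u v bound Ps \<longleftrightarrow>
     internally_disjoint u v Ps \<and> (\<forall>p\<in>set Ps. e3c_path r s t u v p \<and> length p - 1 \<le> bound)"

lemma internally_disjoint_map:
  assumes "distinct xs"
    and "\<And>x y. x \<in> set xs \<Longrightarrow> y \<in> set xs \<Longrightarrow> x \<noteq> y \<Longrightarrow> set (F x) \<inter> set (F y) \<subseteq> {u, v}"
  shows "internally_disjoint u v (map F xs)"
  using assms by (auto simp: internally_disjoint_def nth_eq_iff_index_eq)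

lemma internally_disjoint_append:
  assumes Ps: "internally_disjoint u v Ps" and Qs: "internally_disjoint u v Qs"
    and cross: "\<And>p q. p \<in> set Ps \<Longrightarrow> q \<in> set Qs \<Longrightarrow> set p \<inter> set q \<subseteq> {u, v}"
  shows "internally_disjoint u v (Ps @ Qs)"
  unfolding internally_disjoint_def
proof (intro allI impI)
  fix i j assume ij: "i < length (Ps @ Qs) \<and> j < length (Ps @ Qs) \<and> i \<noteq> j"
  consider "i < length Ps" "j < length Ps" | "\<not> i < length Ps" "\<not> j < length Ps"
    | "i < length Ps" "\<not> j < length Ps" | "\<not> i < length Ps" "j < length Ps"
    by blast
  then show "set ((Ps @ Qs) ! i) \<inter> set ((Ps @ Qs) ! j) \<subseteq> {u, v}"
  proof cases
    case 1
    with Ps ij show ?thesis by (simp add: internally_disjoint_def nth_append)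
  next
    case 2
    with Qs ij show ?thesis
      unfolding internally_disjoint_def
      by (simp add: nth_append) (metis add_diff_inverse_nat nat_add_left_cancel_less)
  next
    case 3
    with cross ij show ?thesis by (simp add: nth_append)
  next
    case 4
    with cross[of "Ps ! j" "Qs ! (i - length Ps)"] ij show ?thesis by (auto simp: nth_append)
  qed
qed

lemma internally_disjoint_pair: "set p \<inter> set q \<subseteq> {u, v} \<Longrightarrow> internally_disjoint u v [p, q]"
  unfolding internally_disjoint_def
proof (intro allI impI)
  fix i j assume pq: "set p \<inter> set q \<subseteq> {u, v}" and "i < length [p, q] \<and> j < length [p, q] \<and> i \<noteq> j"
  then have "i = 0 \<and> j = 1 \<or> i = 1 \<and> j = 0" by auto
  with pq show "set ([p, q] ! i) \<inter> set ([p, q] ! j) \<subseteq> {u, v}"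
    by auto
qed

lemma internally_disjoint_map_append_pair:
  assumes "distinct xs"
    and "\<And>x y. x \<in> set xs \<Longrightarrow> y \<in> set xs \<Longrightarrow> x \<noteq> y \<Longrightarrow> set (F x) \<inter> set (F y) \<subseteq> {u, v}"
    and "\<And>x. x \<in> set xs \<Longrightarrow> set (F x) \<inter> set p \<subseteq> {u, v}"
    and "\<And>x. x \<in> set xs \<Longrightarrow> set (F x) \<inter> set q \<subseteq> {u, v}"
    and "set p \<inter> set q \<subseteq> {u, v}"
  shows "internally_disjoint u v (map F xs @ [p, q])"
proof (rule internally_disjoint_append)
  show "internally_disjoint u v (map F xs)"
    using assms(1,2) by (rule internally_disjoint_map)
  show "internally_disjoint u v [p, q]"
    using assms(5) by (rule internally_disjoint_pair)
  fix p' q' assume "p' \<in> set (map F xs)" "q' \<in> set [p, q]"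
  then show "set p' \<inter> set q' \<subseteq> {u, v}"
    using assms(3,4) by (cases "q' = p") auto
qed

lemma internally_disjoint_map_map:
  assumes "inj f" "internally_disjoint u v Ps"
  shows "internally_disjoint (f u) (f v) (map (map f) Ps)"
  using assms(2) unfolding internally_disjoint_def
  by (auto simp: image_Int[OF assms(1), symmetric])

lemma disjoint_path_family_take:
  "disjoint_path_family r s t u v bound Ps \<Longrightarrow> disjoint_path_family r s t u v bound (take n Ps)"
  by (auto simp: disjoint_path_family_def internally_disjoint_def dest: in_set_takeD)

text \<open>The guard makes \<open>mirror\<close> an involution on all tuples, not only on vertices.\<close>
definition mirror :: "e3vert \<Rightarrow> e3vert" where
  "mirror x = (case x of (A, B, C, d) \<Rightarrow> (C, B, A, if d \<le> 2 then 2 - d else d))"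

lemma mirror_mirror [simp]: "mirror (mirror x) = x"
  by (cases x) (auto simp: mirror_def)

lemma inj_mirror: "inj mirror"
  by (metis injI mirror_mirror)

lemma e3c_adj_mirror: "e3c_adj t s r x y \<Longrightarrow> e3c_adj r s t (mirror x) (mirror y)"
  by (cases x; cases y) (auto simp: e3c_adj_def mirror_def e3c_vertex_def)

lemma e3c_path_mirror: "e3c_path t s r u v p \<Longrightarrow> e3c_path r s t (mirror u) (mirror v) (map mirror p)"
  unfolding e3c_path_iff_successively
  by (auto simp: hd_map last_map distinct_map inj_on_def successively_map
      intro: successively_mono e3c_adj_mirror dest: inj_mirror[THEN injD])

lemma disjoint_path_family_mirror:
  "disjoint_path_family t s r u v bound Ps \<Longrightarrow>
    disjoint_path_family r s t (mirror u) (mirror v) bound (map (map mirror) Ps)"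
  by (auto simp: disjoint_path_family_def internally_disjoint_map_map[OF inj_mirror]
      e3c_path_mirror)

section \<open>Paths between two vertices of the same layer\<close>

locale e3c_endpoints =
  fixes r s t :: nat and A A' B C C' :: "nat list"
  assumes A: "ternary_word r A" and A': "ternary_word r A'" and B: "ternary_word s B"
    and C: "ternary_word t C" and C': "ternary_word t C'"
    and A_neq: "A \<noteq> A'" and C_neq: "C \<noteq> C'"
begin

definition walk_A :: "nat list list" where
  "walk_A = flip_walk A A' (diff_positions A A')"

definition walk_C :: "nat list \<Rightarrow> nat list list" where
  "walk_C X = flip_walk X C' (diff_positions X C')"

definition route_AC :: "nat list \<Rightarrow> nat list \<Rightarrow> e3vert list" where
  "route_AC B\<^sub>0 C\<^sub>0 = map (\<lambda>W. (W, B\<^sub>0, C\<^sub>0, 2)) walk_A @ map (\<lambda>Y. (A', B\<^sub>0, Y, 0)) (walk_C C\<^sub>0)"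

lemma length_words: "length A = r" "length A' = r" "length B = s" "length C = t" "length C' = t"
  using A A' B C C' by (simp_all add: ternary_word_def)

lemma walk_A:
  "walk_A \<noteq> []" "hd walk_A = A" "last walk_A = A'" "distinct walk_A"
  "successively differ_one walk_A" "\<forall>W\<in>set walk_A. ternary_word r W" "length walk_A \<le> Suc r"
  using flip_walk_properties[OF flip_order_diff_positions A A'] length_diff_positions[of A A']
  by (simp_all add: walk_A_def length_words)

lemma walk_C:
  assumes "ternary_word t X"
  shows "walk_C X \<noteq> []" "hd (walk_C X) = X" "last (walk_C X) = C'" "distinct (walk_C X)"
    "successively differ_one (walk_C X)" "\<forall>W\<in>set (walk_C X). ternary_word t W"
    "length (walk_C X) \<le> Suc t"
  using assms flip_walk_properties[OF flip_order_diff_positions assms C']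
    length_diff_positions[of X C']
  by (simp_all add: walk_C_def length_words ternary_word_def)

lemma route_AC:
  assumes "ternary_word s B\<^sub>0" "ternary_word t C\<^sub>0"
  shows "route_AC B\<^sub>0 C\<^sub>0 \<noteq> []" "hd (route_AC B\<^sub>0 C\<^sub>0) = (A, B\<^sub>0, C\<^sub>0, 2)"
    "last (route_AC B\<^sub>0 C\<^sub>0) = (A', B\<^sub>0, C', 0)" "distinct (route_AC B\<^sub>0 C\<^sub>0)"
    "successively (e3c_adj r s t) (route_AC B\<^sub>0 C\<^sub>0)" "length (route_AC B\<^sub>0 C\<^sub>0) \<le> r + t + 2"
proof -
  note A_walk = walk_A and C_walk = walk_C[OF assms(2)]
  show "route_AC B\<^sub>0 C\<^sub>0 \<noteq> []" "hd (route_AC B\<^sub>0 C\<^sub>0) = (A, B\<^sub>0, C\<^sub>0, 2)"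
    "last (route_AC B\<^sub>0 C\<^sub>0) = (A', B\<^sub>0, C', 0)" "length (route_AC B\<^sub>0 C\<^sub>0) \<le> r + t + 2"
    using A_walk C_walk by (auto simp: route_AC_def hd_map last_map)
  show "distinct (route_AC B\<^sub>0 C\<^sub>0)"
    using A_walk C_walk by (auto simp: route_AC_def distinct_map inj_on_def)
  show "successively (e3c_adj r s t) (route_AC B\<^sub>0 C\<^sub>0)"
    using successively_e3c_adj_layer2[OF A_walk(5,6) assms]
      successively_e3c_adj_layer0[OF C_walk(5,6) A' assms(1)] A_walk C_walk assms A'
    by (simp add: route_AC_def successively_append_iff hd_map last_map e3c_adj_change_layer)
qed

lemma set_route_AC:
  "set (route_AC B\<^sub>0 C\<^sub>0) \<subseteq> {(W, B\<^sub>0, C\<^sub>0, 2) | W. True} \<union> {(A', B\<^sub>0, Y, 0) | Y. True}"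
  by (auto simp: route_AC_def)

definition layer1_path_via :: "nat list \<Rightarrow> e3vert list" where
  "layer1_path_via B\<^sub>0 =
     (A, B, C, 1) # (A, B\<^sub>0, C, 1) # route_AC B\<^sub>0 C @ [(A', B\<^sub>0, C', 1), (A', B, C', 1)]"

definition layer1_path_CA :: "e3vert list" where
  "layer1_path_CA =
     (A, B, C, 1) # map (\<lambda>Y. (A, B, Y, 0)) (walk_C C) @ map (\<lambda>W. (W, B, C', 2)) walk_A
       @ [(A', B, C', 1)]"

definition layer1_path_AC :: "e3vert list" where
  "layer1_path_AC = (A, B, C, 1) # route_AC B C @ [(A', B, C', 1)]"

definition layer1_paths :: "e3vert list list" where
  "layer1_paths =
     map (\<lambda>(k, b). layer1_path_via (B[k := b])) (ternary_changes B r)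
       @ [layer1_path_CA, layer1_path_AC]"

lemma layer1_path_via:
  assumes "ternary_word s B\<^sub>0" "differ_one B B\<^sub>0"
  shows "e3c_path r s t (A, B, C, 1) (A', B, C', 1) (layer1_path_via B\<^sub>0)"
    "length (layer1_path_via B\<^sub>0) - 1 \<le> r + t + 5"
proof -
  note route = route_AC[OF assms(1) C]
  have "B\<^sub>0 \<noteq> B"
    using assms(2) differ_one_imp_neq by metis
  then have "distinct (layer1_path_via B\<^sub>0)"
    using route(4) set_route_AC[of B\<^sub>0 C] A_neq by (auto simp: layer1_path_via_def)
  moreover have "successively (e3c_adj r s t) (layer1_path_via B\<^sub>0)"
    using route assms A A' B C C'
    by (simp add: layer1_path_via_def successively_Cons successively_append_iff e3c_adj_change_layer
        e3c_adj_layer1 differ_one_sym)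
  ultimately show "e3c_path r s t (A, B, C, 1) (A', B, C', 1) (layer1_path_via B\<^sub>0)"
    by (simp add: e3c_path_iff_successively layer1_path_via_def)
  show "length (layer1_path_via B\<^sub>0) - 1 \<le> r + t + 5"
    using route by (simp add: layer1_path_via_def)
qed

lemma layer1_path_CA:
  "e3c_path r s t (A, B, C, 1) (A', B, C', 1) layer1_path_CA"
  "length layer1_path_CA - 1 \<le> r + t + 5"
proof -
  note A_walk = walk_A and C_walk = walk_C[OF C]
  have "distinct layer1_path_CA"
    using A_walk C_walk A_neq C_neq by (auto simp: layer1_path_CA_def distinct_map inj_on_def)
  moreover have "successively (e3c_adj r s t) layer1_path_CA"
    using A_walk C_walk A A' B C C'
      successively_e3c_adj_layer2[OF A_walk(5,6) B C']
      successively_e3c_adj_layer0[OF C_walk(5,6) A B]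
    by (simp add: layer1_path_CA_def successively_Cons successively_append_iff hd_map last_map
        e3c_adj_change_layer)
  ultimately show "e3c_path r s t (A, B, C, 1) (A', B, C', 1) layer1_path_CA"
    by (simp add: e3c_path_iff_successively layer1_path_CA_def)
  show "length layer1_path_CA - 1 \<le> r + t + 5"
    using A_walk C_walk by (simp add: layer1_path_CA_def)
qed

lemma layer1_path_AC:
  "e3c_path r s t (A, B, C, 1) (A', B, C', 1) layer1_path_AC"
  "length layer1_path_AC - 1 \<le> r + t + 5"
proof -
  note route = route_AC[OF B C]
  have "distinct layer1_path_AC"
    using route(4) set_route_AC[of B C] A_neq by (auto simp: layer1_path_AC_def)
  moreover have "successively (e3c_adj r s t) layer1_path_AC"
    using route A A' B C C'
    by (simp add: layer1_path_AC_def successively_Cons successively_append_iff e3c_adj_change_layer)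
  ultimately show "e3c_path r s t (A, B, C, 1) (A', B, C', 1) layer1_path_AC"
    by (simp add: e3c_path_iff_successively layer1_path_AC_def)
  show "length layer1_path_AC - 1 \<le> r + t + 5"
    using route by (simp add: layer1_path_AC_def)
qed

lemma set_layer1_path_via:
  "set (layer1_path_via B\<^sub>0) \<subseteq> {(A, B, C, 1), (A', B, C', 1)} \<union> {(W, B\<^sub>0, Y, d) | W Y d. True}"
  using set_route_AC[of B\<^sub>0 C] by (auto simp: layer1_path_via_def)

lemma set_layer1_path_CA_AC:
  "set layer1_path_CA \<subseteq> {(A, B, C, 1), (A', B, C', 1)} \<union> {(W, B, Y, d) | W Y d. True}"
  "set layer1_path_AC \<subseteq> {(A, B, C, 1), (A', B, C', 1)} \<union> {(W, B, Y, d) | W Y d. True}"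
  by (auto simp: layer1_path_CA_def layer1_path_AC_def route_AC_def)

lemma layer1_path_CA_AC_disjoint:
  "set layer1_path_CA \<inter> set layer1_path_AC \<subseteq> {(A, B, C, 1), (A', B, C', 1)}"
  using A_neq C_neq by (auto simp: layer1_path_CA_def layer1_path_AC_def route_AC_def)

lemma layer1_paths_internally_disjoint:
  assumes "r \<le> s"
  shows "internally_disjoint (A, B, C, 1) (A', B, C', 1) layer1_paths"
proof -
  let ?u = "(A, B, C, 1::nat)" and ?v = "(A', B, C', 1::nat)"
  let ?via = "\<lambda>(k, b). layer1_path_via (B[k := b])"
  have change: "k < length B" "b \<noteq> B ! k" "B[k := b] \<noteq> B"
    if "(k, b) \<in> set (ternary_changes B r)" for k b
    using in_set_ternary_changes[OF that] assms list_update_neq[of k B b]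
    by (auto simp: length_words)
  have via_via: "set (?via x) \<inter> set (?via y) \<subseteq> {?u, ?v}"
    if "x \<in> set (ternary_changes B r)" "y \<in> set (ternary_changes B r)" "x \<noteq> y" for x y
  proof -
    obtain k b k' b' where xy: "x = (k, b)" "y = (k', b')"
      by fastforce
    then have "B[k := b] \<noteq> B[k' := b']"
      using that change list_update_inject by metis
    then show ?thesis
      using set_layer1_path_via[of "B[k := b]"] set_layer1_path_via[of "B[k' := b']"]
      by (auto simp: xy)
  qed
  have via_CA: "set (?via x) \<inter> set layer1_path_CA \<subseteq> {?u, ?v}"
    and via_AC: "set (?via x) \<inter> set layer1_path_AC \<subseteq> {?u, ?v}"
    if "x \<in> set (ternary_changes B r)" for x
  proof -
    obtain k b where x: "x = (k, b)"
      by fastforce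
    then have "B[k := b] \<noteq> B"
      using that change(3) by simp
    then show "set (?via x) \<inter> set layer1_path_CA \<subseteq> {?u, ?v}"
      "set (?via x) \<inter> set layer1_path_AC \<subseteq> {?u, ?v}"
      using set_layer1_path_via[of "B[k := b]"] set_layer1_path_CA_AC by (auto simp: x)
  qed
  show ?thesis
    unfolding layer1_paths_def
    by (rule internally_disjoint_map_append_pair[OF distinct_ternary_changes via_via via_CA via_AC
          layer1_path_CA_AC_disjoint])
qed

theorem layer1_paths:
  assumes "r \<le> s"
  shows "length layer1_paths = 2 * r + 2"
    "disjoint_path_family r s t (A, B, C, 1) (A', B, C', 1) (r + t + 5) layer1_paths"
proof -
  show "length layer1_paths = 2 * r + 2"
    by (simp add: layer1_paths_def)
  have "k < length B" "b < 3" "b \<noteq> B ! k" if "(k, b) \<in> set (ternary_changes B r)" for k b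
    using in_set_ternary_changes[OF that] assms by (auto simp: length_words)
  then have "e3c_path r s t (A, B, C, 1) (A', B, C', 1) p \<and> length p - 1 \<le> r + t + 5"
    if "p \<in> set layer1_paths" for p
    using that layer1_path_via[OF ternary_word_list_update[OF B] differ_one_list_update]
      layer1_path_CA layer1_path_AC
    by (auto simp: layer1_paths_def)
  then show "disjoint_path_family r s t (A, B, C, 1) (A', B, C', 1) (r + t + 5) layer1_paths"
    using layer1_paths_internally_disjoint[OF assms] by (simp add: disjoint_path_family_def)
qed

lemma cyclic_flip_walk_A:
  assumes "i < r" "a < 3"
  defines "T \<equiv> cyclic_flip_walk (A[i := a]) A' i"
  shows "T \<noteq> []" "hd T = A[i := a]" "last T = A'" "distinct T"
    "successively differ_one T" "\<forall>W\<in>set T. ternary_word r W" "length T \<le> Suc r"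
  using flip_walk_properties[OF flip_order_cyclic_diff_positions ternary_word_list_update[OF A] A',
      of i a i] length_cyclic_diff_positions[of i "A[i := a]" A'] assms
  by (simp_all add: cyclic_flip_walk_def length_words)

definition layer2_path_via :: "nat \<Rightarrow> nat \<Rightarrow> e3vert list" where
  "layer2_path_via i a =
     (A, B, C, 2) # (A[i := a], B, C, 2) # map (\<lambda>Y. (A[i := a], B, Y, 0)) (walk_C C)
       @ map (\<lambda>W. (W, B, C', 2)) (cyclic_flip_walk (A[i := a]) A' i)"

lemma layer2_path_via:
  assumes "i < r" "a < 3" "a \<noteq> A ! i"
  shows "e3c_path r s t (A, B, C, 2) (A', B, C', 2) (layer2_path_via i a)"
    "length (layer2_path_via i a) - 1 \<le> r + t + 7"
proof -
  note T = cyclic_flip_walk_A[OF assms(1,2)] and C_walk = walk_C[OF C]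
  have A_i: "ternary_word r (A[i := a])" "A[i := a] \<noteq> A" "differ_one A (A[i := a])"
    using assms A ternary_word_list_update[OF A] list_update_neq[of i A a]
      differ_one_list_update[of i A a]
    by (simp_all add: length_words)
  have "distinct (layer2_path_via i a)"
    using T C_walk A_i C_neq by (auto simp: layer2_path_via_def distinct_map inj_on_def)
  moreover have "successively (e3c_adj r s t) (layer2_path_via i a)"
    using T C_walk A_i A B C C'
      successively_e3c_adj_layer2[OF T(5,6) B C']
      successively_e3c_adj_layer0[OF C_walk(5,6) A_i(1) B]
    by (simp add: layer2_path_via_def successively_Cons successively_append_iff hd_map last_map
        e3c_adj_change_layer e3c_adj_layer2)
  ultimately show "e3c_path r s t (A, B, C, 2) (A', B, C', 2) (layer2_path_via i a)"
    using T by (simp add: e3c_path_iff_successively layer2_path_via_def last_map)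
  show "length (layer2_path_via i a) - 1 \<le> r + t + 7"
    using T C_walk by (simp add: layer2_path_via_def)
qed

lemma set_layer2_path_via:
  assumes "i < r" "a < 3"
  shows "set (layer2_path_via i a) \<subseteq> {(A, B, C, 2), (A', B, C', 2), (A[i := a], B, C, 2)}
    \<union> {(A[i := a], B, Y, 0) | Y. True}
    \<union> {(W, B, C', 2) | W. W \<in> set (butlast (cyclic_flip_walk (A[i := a]) A' i))}"
  using set_subset_insert_last_butlast[of "cyclic_flip_walk (A[i := a]) A' i"]
    cyclic_flip_walk_A(3)[OF assms]
  by (auto simp: layer2_path_via_def)

definition C_star :: "nat list" where
  "C_star = (let k = hd (diff_positions C C') in C[k := 3 - C ! k - C' ! k])"

lemma C_star: "ternary_word t C_star" "C_star \<noteq> C" "C_star \<noteq> C'" "differ_one C C_star"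
proof -
  define k where "k = hd (diff_positions C C')"
  have "diff_positions C C' \<noteq> []"
    using diff_positions_eq_Nil_iff[of C C'] C_neq length_words by simp
  then have k: "k < t" "C ! k \<noteq> C' ! k"
    using hd_in_set set_diff_positions[of C C'] length_words by (auto simp: k_def)
  moreover have "C ! k < 3" "C' ! k < 3"
    using k C C' length_words by (simp_all add: ternary_word_def)
  ultimately have c: "3 - C ! k - C' ! k < 3" "3 - C ! k - C' ! k \<noteq> C ! k"
    "3 - C ! k - C' ! k \<noteq> C' ! k"
    using third_ternary_value by blast+
  have C_star: "C_star = C[k := 3 - C ! k - C' ! k]"
    by (simp add: C_star_def k_def Let_def)
  show "ternary_word t C_star" "C_star \<noteq> C" "differ_one C C_star"
    unfolding C_star using k c ternary_word_list_update[OF C] list_update_neq[of k C]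
      differ_one_list_update[of k C] by (simp_all add: length_words)
  show "C_star \<noteq> C'"
    unfolding C_star using k c length_words by (metis nth_list_update_eq)
qed

definition B_star :: "nat list" where
  "B_star = B[0 := (B ! 0 + 1) mod 3]"

lemma B_star:
  assumes "1 \<le> s"
  shows "ternary_word s B_star" "B_star \<noteq> B" "differ_one B B_star"
proof -
  have "(B ! 0 + 1) mod 3 \<noteq> B ! 0"
    by presburger
  then show "ternary_word s B_star" "B_star \<noteq> B" "differ_one B B_star"
    unfolding B_star_def using assms ternary_word_list_update[OF B] list_update_neq[of 0 B]
      differ_one_list_update[of 0 B] by (simp_all add: length_words)
qed

definition layer2_path_short :: "e3vert list" where
  "layer2_path_short =
     (A, B, C, 2) # map (\<lambda>Y. (A, B, Y, 0)) (walk_C C) @ [(A, B, C', 2), (A', B, C', 2)]"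

definition layer2_path_detour :: "e3vert list" where
  "layer2_path_detour =
     (A, B, C, 2) # (A, B, C, 0) # (A, B, C_star, 0) # route_AC B C_star @ [(A', B, C', 2)]"

definition layer2_path_B :: "e3vert list" where
  "layer2_path_B =
     (A, B, C, 2) # (A, B, C, 1) # (A, B_star, C, 1) # route_AC B_star C
       @ [(A', B_star, C', 1), (A', B, C', 1), (A', B, C', 2)]"

lemma layer2_path_short:
  assumes "differ_one A A'"
  shows "e3c_path r s t (A, B, C, 2) (A', B, C', 2) layer2_path_short"
    "length layer2_path_short - 1 \<le> r + t + 7"
proof -
  note C_walk = walk_C[OF C]
  have "distinct layer2_path_short"
    using C_walk A_neq C_neq by (auto simp: layer2_path_short_def distinct_map inj_on_def)
  moreover have "successively (e3c_adj r s t) layer2_path_short"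
    using C_walk A A' B C C' assms successively_e3c_adj_layer0[OF C_walk(5,6) A B]
    by (simp add: layer2_path_short_def successively_Cons successively_append_iff hd_map last_map
        e3c_adj_change_layer e3c_adj_layer2)
  ultimately show "e3c_path r s t (A, B, C, 2) (A', B, C', 2) layer2_path_short"
    by (simp add: e3c_path_iff_successively layer2_path_short_def)
  show "length layer2_path_short - 1 \<le> r + t + 7"
    using C_walk by (simp add: layer2_path_short_def)
qed

lemma layer2_path_detour:
  "e3c_path r s t (A, B, C, 2) (A', B, C', 2) layer2_path_detour"
  "length layer2_path_detour - 1 \<le> r + t + 7"
proof -
  note route = route_AC[OF B C_star(1)]
  have "distinct layer2_path_detour"
    using route(4) set_route_AC[of B C_star] C_star A_neq by (auto simp: layer2_path_detour_def)
  moreover have "successively (e3c_adj r s t) layer2_path_detour"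
    using route A A' B C C' C_star
    by (simp add: layer2_path_detour_def successively_Cons successively_append_iff
        e3c_adj_change_layer e3c_adj_layer0)
  ultimately show "e3c_path r s t (A, B, C, 2) (A', B, C', 2) layer2_path_detour"
    by (simp add: e3c_path_iff_successively layer2_path_detour_def)
  show "length layer2_path_detour - 1 \<le> r + t + 7"
    using route by (simp add: layer2_path_detour_def)
qed

lemma layer2_path_B:
  assumes "1 \<le> s"
  shows "e3c_path r s t (A, B, C, 2) (A', B, C', 2) layer2_path_B"
    "length layer2_path_B - 1 \<le> r + t + 7"
proof -
  note route = route_AC[OF B_star(1)[OF assms] C]
  have "distinct layer2_path_B"
    using route(4) set_route_AC[of B_star C] B_star[OF assms] A_neq
    by (auto simp: layer2_path_B_def)
  moreover have "successively (e3c_adj r s t) layer2_path_B"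
    using route A A' B C C' B_star[OF assms]
    by (simp add: layer2_path_B_def successively_Cons successively_append_iff
        e3c_adj_change_layer e3c_adj_layer1 differ_one_sym)
  ultimately show "e3c_path r s t (A, B, C, 2) (A', B, C', 2) layer2_path_B"
    by (simp add: e3c_path_iff_successively layer2_path_B_def)
  show "length layer2_path_B - 1 \<le> r + t + 7"
    using route by (simp add: layer2_path_B_def)
qed

text \<open>
  The layer-2 segment of the detour uses \<open>C_star \<notin> {C, C'}\<close>, so it avoids the layer-2 vertices
  of the paths \<open>layer2_path_via\<close>. Its layer-0 segment at \<open>A'\<close> would meet \<open>layer2_path_via i a\<close>
  when \<open>A[i := a] = A'\<close>, that is, when \<open>A\<close> and \<open>A'\<close> differ in one position; then the short path
  is used instead.
\<close>
definition layer2_path_C :: "e3vert list" where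
  "layer2_path_C = (if differ_one A A' then layer2_path_short else layer2_path_detour)"

definition layer2_paths :: "e3vert list list" where
  "layer2_paths =
     map (\<lambda>(i, a). layer2_path_via i a) (ternary_changes A r) @ [layer2_path_C, layer2_path_B]"

lemma layer2_path_C:
  "e3c_path r s t (A, B, C, 2) (A', B, C', 2) layer2_path_C"
  "length layer2_path_C - 1 \<le> r + t + 7"
  using layer2_path_short layer2_path_detour by (simp_all add: layer2_path_C_def)

lemma set_layer2_path_short:
  "set layer2_path_short \<subseteq> {(A, B, C, 2), (A', B, C', 2), (A, B, C', 2)} \<union> {(A, B, Y, 0) | Y. True}"
  by (auto simp: layer2_path_short_def)

lemma set_layer2_path_detour:
  "set layer2_path_detour \<subseteq> {(A, B, C, 2), (A', B, C', 2)} \<union> {(A, B, Y, 0) | Y. True}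
     \<union> {(W, B, C_star, 2) | W. True} \<union> {(A', B, Y, 0) | Y. True}"
  using set_route_AC[of B C_star] by (auto simp: layer2_path_detour_def)

lemma set_layer2_path_B:
  "set layer2_path_B \<subseteq> {(A, B, C, 2), (A', B, C', 2), (A, B, C, 1), (A', B, C', 1)}
     \<union> {(W, B_star, Y, d) | W Y d. True}"
  using set_route_AC[of B_star C] by (auto simp: layer2_path_B_def)

lemma layer2_path_via_disjoint:
  assumes "i < r" "a < 3" "a \<noteq> A ! i" "j < r" "b < 3" "b \<noteq> A ! j" "(i, a) \<noteq> (j, b)"
  shows "set (layer2_path_via i a) \<inter> set (layer2_path_via j b) \<subseteq> {(A, B, C, 2), (A', B, C', 2)}"
proof
  fix x assume x: "x \<in> set (layer2_path_via i a) \<inter> set (layer2_path_via j b)"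
  have "A[i := a] \<noteq> A[j := b]"
    using assms list_update_inject[of i A j a b] by (auto simp: length_words)
  moreover have "set (butlast (cyclic_flip_walk (A[i := a]) A' i)) \<inter>
      set (butlast (cyclic_flip_walk (A[j := b]) A' j)) = {}"
    using assms by (intro butlast_cyclic_flip_walks_disjoint) (simp_all add: length_words)
  moreover have "x \<in> {(A, B, C, 2), (A', B, C', 2), (A[i := a], B, C, 2)}
      \<union> {(A[i := a], B, Y, 0) | Y. True}
      \<union> {(W, B, C', 2) | W. W \<in> set (butlast (cyclic_flip_walk (A[i := a]) A' i))}"
    using x set_layer2_path_via[OF assms(1,2)] by blast
  moreover have "x \<in> {(A, B, C, 2), (A', B, C', 2), (A[j := b], B, C, 2)}
      \<union> {(A[j := b], B, Y, 0) | Y. True}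
      \<union> {(W, B, C', 2) | W. W \<in> set (butlast (cyclic_flip_walk (A[j := b]) A' j))}"
    using x set_layer2_path_via[OF assms(4,5)] by blast
  ultimately show "x \<in> {(A, B, C, 2), (A', B, C', 2)}"
    using C_neq by auto
qed

lemma layer2_path_via_short_disjoint:
  assumes "i < r" "a < 3" "a \<noteq> A ! i"
  shows "set (layer2_path_via i a) \<inter> set layer2_path_short \<subseteq> {(A, B, C, 2), (A', B, C', 2)}"
proof -
  have "A[i := a] \<noteq> A"
    using assms list_update_neq[of i A a] by (simp add: length_words)
  moreover have "A \<notin> set (butlast (cyclic_flip_walk (A[i := a]) A' i))"
    using cyclic_flip_walk_keeps_start[of i "A[i := a]" A A'] assms by (auto simp: length_words)
  ultimately show ?thesis
    using set_layer2_path_via[OF assms(1,2)] set_layer2_path_short by blast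
qed

lemma layer2_path_via_detour_disjoint:
  assumes "i < r" "a < 3" "a \<noteq> A ! i" "\<not> differ_one A A'"
  shows "set (layer2_path_via i a) \<inter> set layer2_path_detour \<subseteq> {(A, B, C, 2), (A', B, C', 2)}"
proof -
  have "A[i := a] \<noteq> A" "A[i := a] \<noteq> A'"
    using assms list_update_neq[of i A a] differ_one_list_update[of i A a]
    by (auto simp: length_words)
  then show ?thesis
    using set_layer2_path_via[OF assms(1,2)] set_layer2_path_detour C_star(2,3) by fastforce
qed

lemma layer2_path_B_disjoint:
  assumes "1 \<le> s" "set p \<subseteq> {(A, B, C, 2), (A', B, C', 2)} \<union> {(W, B, Y, d) | W Y d. d \<noteq> 1}"
  shows "set p \<inter> set layer2_path_B \<subseteq> {(A, B, C, 2), (A', B, C', 2)}"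
  using assms set_layer2_path_B B_star(2)[OF assms(1)] by blast

lemma layer2_paths_internally_disjoint:
  assumes "1 \<le> s"
  shows "internally_disjoint (A, B, C, 2) (A', B, C', 2) layer2_paths"
proof -
  let ?u = "(A, B, C, 2::nat)" and ?v = "(A', B, C', 2::nat)"
  let ?via = "\<lambda>(i, a). layer2_path_via i a"
  have change: "i < r" "a < 3" "a \<noteq> A ! i" if "(i, a) \<in> set (ternary_changes A r)" for i a
    using in_set_ternary_changes[OF that] by auto
  have via_via: "set (?via x) \<inter> set (?via y) \<subseteq> {?u, ?v}"
    if "x \<in> set (ternary_changes A r)" "y \<in> set (ternary_changes A r)" "x \<noteq> y" for x y
  proof -
    obtain i a j b where xy: "x = (i, a)" "y = (j, b)"
      by fastforce
    show ?thesis
      using layer2_path_via_disjoint[OF change[of i a] change[of j b]] that by (simp add: xy)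
  qed
  have via_C: "set (?via x) \<inter> set layer2_path_C \<subseteq> {?u, ?v}"
    and via_B: "set (?via x) \<inter> set layer2_path_B \<subseteq> {?u, ?v}"
    if "x \<in> set (ternary_changes A r)" for x
  proof -
    obtain i a where x: "x = (i, a)"
      by fastforce
    note ia = change[OF that[unfolded x]]
    show "set (?via x) \<inter> set layer2_path_C \<subseteq> {?u, ?v}"
      using layer2_path_via_short_disjoint[OF ia] layer2_path_via_detour_disjoint[OF ia]
      by (simp add: x layer2_path_C_def)
    show "set (?via x) \<inter> set layer2_path_B \<subseteq> {?u, ?v}"
      using set_layer2_path_via[OF ia(1,2)]
      by (intro layer2_path_B_disjoint[OF assms]) (auto simp: x)
  qed
  have C_B: "set layer2_path_C \<inter> set layer2_path_B \<subseteq> {?u, ?v}"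
    using set_layer2_path_short set_layer2_path_detour
    by (intro layer2_path_B_disjoint[OF assms]) (auto simp: layer2_path_C_def)
  show ?thesis
    unfolding layer2_paths_def
    using internally_disjoint_map_append_pair[OF distinct_ternary_changes via_via via_C via_B C_B]
    by simp
qed

theorem layer2_paths:
  assumes "1 \<le> s"
  shows "length layer2_paths = 2 * r + 2"
    "disjoint_path_family r s t (A, B, C, 2) (A', B, C', 2) (r + t + 7) layer2_paths"
proof -
  show "length layer2_paths = 2 * r + 2"
    by (simp add: layer2_paths_def)
  have "e3c_path r s t (A, B, C, 2) (A', B, C', 2) p \<and> length p - 1 \<le> r + t + 7"
    if "p \<in> set layer2_paths" for p
    using that in_set_ternary_changes layer2_path_via layer2_path_C layer2_path_B[OF assms]
    by (fastforce simp: layer2_paths_def)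
  then show "disjoint_path_family r s t (A, B, C, 2) (A', B, C', 2) (r + t + 7) layer2_paths"
    using layer2_paths_internally_disjoint[OF assms] by (simp add: disjoint_path_family_def)
qed

theorem layer0_paths:
  assumes "1 \<le> s" "r \<le> t"
  shows "\<exists>Ps. length Ps = 2 * r + 2 \<and>
    disjoint_path_family r s t (A, B, C, 0) (A', B, C', 0) (r + t + 7) Ps"
proof -
  interpret mirrored: e3c_endpoints t s r C C' B A A'
    using A A' B C C' A_neq C_neq by unfold_locales
  have "disjoint_path_family r s t (A, B, C, 0) (A', B, C', 0) (r + t + 7)
      (map (map mirror) mirrored.layer2_paths)"
    using disjoint_path_family_mirror[OF mirrored.layer2_paths(2)[OF assms(1)]]
    by (simp add: mirror_def add.commute)
  then show ?thesis
    using mirrored.layer2_paths(1)[OF assms(1)] assms(2)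
    by (intro exI[of _ "take (2 * r + 2) (map (map mirror) mirrored.layer2_paths)"])
      (simp add: disjoint_path_family_take)
qed

end

theorem lemma11:
  fixes r s t :: nat and A B C A' C' :: "nat list" and d :: nat
  assumes "1 \<le> r" "r \<le> s" "s \<le> t"
    and "e3c_vertex r s t (A, B, C, d)" and "e3c_vertex r s t (A', B, C', d)"
    and "A \<noteq> A'" and "C \<noteq> C'"
  shows "\<exists>Ps. length Ps = 2 * r + 2 \<and>
           internally_disjoint (A, B, C, d) (A', B, C', d) Ps \<and>
           (\<forall>p\<in>set Ps. e3c_path r s t (A, B, C, d) (A', B, C', d) p \<and>
              length p - 1 \<le> (if d = 1 then r + t + 5 else r + t + 7))"
proof -
  interpret e3c_endpoints r s t A A' B C C'
    using assms(4-7) by unfold_locales simp_all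
  have "d < 3"
    using assms(4) by simp
  then consider "d = 0" | "d = 1" | "d = 2"
    by linarith
  then show ?thesis
  proof cases
    case 1
    then show ?thesis
      using layer0_paths assms(1-3) by (simp add: disjoint_path_family_def)
  next
    case 2
    then show ?thesis
      using layer1_paths assms(2) by (auto simp: disjoint_path_family_def)
  next
    case 3
    then show ?thesis
      using layer2_paths assms(1-3) by (auto simp: disjoint_path_family_def)
  qed
qed

end
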